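(* Suppose $f$ satisfies conditions (a)–(c) below with constants $L,M$, $h\ge0$ and $L(T^2+Th)\le\frac1{12}$. For $x,y\in\mathbb R^d$ let $\Phi_{x,y}:\mathbb R^d\to\mathbb R^d$ be a map with $\tilde q_{T,h}(x,v)=q_T(y,\Phi_{x,y}(v))$ for all $v$. Then for all $x,y,v\in\mathbb R^d$, \[ \|\Phi_{x,y}(v)-v\|\le\frac3{2T}\|x-y\|+2h^2\big(LT^{-1}\|x\|+L\|v\|+MT^{-1}\|x\|^2+MT\|v\|^2\big). \]
   Context: $f:\mathbb R^d\to\mathbb R$. Conditions: (a) $f$ has global minimum at $0$, $f(0)=0$; (b) $f\in C^2$, $\|\nabla^2f(x)\|_{op}\le L$ for all $x$; (c) $f\in C^3$, $\|\nabla^3f(x)\|_{op}\le M$ (operator norms of symmetric multilinear forms w.r.t. unit vectors). $q_t(x,v)$ is the time-$t$ position of the solution of $\dot x=v,\dot v=-\nabla f(x)$ from $(x,v)$. For $h>0$ with $T/h\in\mathbb N$ (always assumed), $\tilde q_{T,h}(x,v)=x_N$, $N=T/h$, where $x_0=x,v_0=v$, $x_{j+1}=x_j+hv_j-\frac{h^2}2\nabla f(x_j)$, $v_{j+1}=v_j-\frac h2(\nabla f(x_j)+\nabla f(x_{j+1}))$; $\tilde q_{T,0}=q_T$. *)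

theory Defs
  imports "HOL-Analysis.Analysis"
begin

text \<open>Solutions of the Hamiltonian ODE  x' = v, v' = - grad f (x), defined for all times,
  where g stands for the gradient of f.\<close>
definition ham_sol :: "('a::euclidean_space \<Rightarrow> 'a) \<Rightarrow> 'a \<Rightarrow> 'a \<Rightarrow> (real \<Rightarrow> 'a) \<Rightarrow> (real \<Rightarrow> 'a) \<Rightarrow> bool" where
  "ham_sol g x v X V \<longleftrightarrow> X 0 = x \<and> V 0 = v \<and>
     (\<forall>s. (X has_vector_derivative V s) (at s) \<and> (V has_vector_derivative - g (X s)) (at s))"

definition ham_q :: "('a::euclidean_space \<Rightarrow> 'a) \<Rightarrow> real \<Rightarrow> 'a \<Rightarrow> 'a \<Rightarrow> 'a" where
  "ham_q g t x v = (THE p. \<exists>X V. ham_sol g x v X V \<and> X t = p)"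

definition vv_step :: "('a::euclidean_space \<Rightarrow> 'a) \<Rightarrow> real \<Rightarrow> 'a \<times> 'a \<Rightarrow> 'a \<times> 'a" where
  "vv_step g h xv = (let x = fst xv; v = snd xv;
                         x' = x + h *\<^sub>R v - (h\<^sup>2 / 2) *\<^sub>R g x
                     in (x', v - (h / 2) *\<^sub>R (g x + g x')))"

definition vv_q :: "('a::euclidean_space \<Rightarrow> 'a) \<Rightarrow> real \<Rightarrow> real \<Rightarrow> 'a \<Rightarrow> 'a \<Rightarrow> 'a" where
  "vv_q g T h x v = (if h = 0 then ham_q g T x v
                     else fst ((vv_step g h ^^ nat (round (T / h))) (x, v)))"

end

theory Submission
  imports Defs
begin

text \<open>As long as L T^2 \<le> 1/12, two exact trajectories started at (x1, v1) and (x2, v2) stay within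
  24/23 (|x1 - x2| + T |v1 - v2|) of each other, and at time T their difference is
  x1 - x2 + T (v1 - v2) up to 1/23 of that quantity. So v \<mapsto> q_T(y, v) can be inverted
  quantitatively: if q_T(y, w) and q_T(x, v) are \<epsilon> apart, then
  |w - v| \<le> (12/11 |x - y| + 23/22 \<epsilon>) / T. With w = \<Phi>(v), \<epsilon> is the global position error
  of velocity Verlet, bounded by propagating its O(h^3) local defects (controlled by L, M and a
  priori bounds on the trajectory) through a discrete Gronwall argument that again uses
  L T^2 \<le> 1/12. Trajectories exist globally by a Picard iteration in a Bielecki-weighted sup norm.\<close>

section \<open>Mean value inequalities\<close>

lemma norm_diff_le_majorant:
  fixes f :: "real \<Rightarrow> 'b::real_normed_vector"
  assumes "a \<le> b"
    and f': "\<And>t. t \<in> {a..b} \<Longrightarrow> (f has_vector_derivative f' t) (at t)"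
    and G': "\<And>t. t \<in> {a..b} \<Longrightarrow> (G has_real_derivative G' t) (at t)"
    and bound: "\<And>t. t \<in> {a..b} \<Longrightarrow> norm (f' t) \<le> G' t"
  shows "norm (f b - f a) \<le> G b - G a"
proof (cases "a = b")
  case False
  have "continuous_on {a..b} f"
    using f' by (intro continuous_at_imp_continuous_on) (metis has_vector_derivative_continuous)
  moreover have "continuous_on {a..b} G"
    using G' by (intro continuous_at_imp_continuous_on) (metis DERIV_isCont)
  ultimately show ?thesis
    using False \<open>a \<le> b\<close> f' G' bound
    by (intro differentiable_bound_general[where f' = f' and \<phi>' = G'])
       (auto simp: has_real_derivative_iff_has_vector_derivative)
qed simp

lemma norm_diff_le_power_majorant:
  fixes f :: "real \<Rightarrow> 'b::real_normed_vector"
  assumes "a \<le> b"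
    and f': "\<And>t. t \<in> {a..b} \<Longrightarrow> (f has_vector_derivative f' t) (at t)"
    and bound: "\<And>t. t \<in> {a..b} \<Longrightarrow> norm (f' t) \<le> C * (t - a) ^ k"
  shows "norm (f b - f a) \<le> C * (b - a) ^ Suc k / Suc k"
proof -
  have "norm (f b - f a) \<le> C * (b - a) ^ Suc k / Suc k - C * (a - a) ^ Suc k / Suc k"
  proof (rule norm_diff_le_majorant[OF \<open>a \<le> b\<close> f'])
    fix t
    have "((\<lambda>t. (t - a) ^ Suc k) has_real_derivative Suc k * (t - a) ^ k) (at t)"
      by (rule DERIV_power[OF DERIV_diff[OF DERIV_ident DERIV_const], THEN DERIV_cong]) simp
    from DERIV_cdivide[OF DERIV_cmult[OF this, of C], of "Suc k"]
    show "((\<lambda>t. C * (t - a) ^ Suc k / Suc k) has_real_derivative C * (t - a) ^ k) (at t)"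
      by (simp del: of_nat_Suc)
  qed (use bound in auto)
  then show ?thesis by simp
qed

lemma second_order_remainder:
  fixes X V A :: "real \<Rightarrow> 'b::real_normed_vector"
  assumes "a \<le> b"
    and X': "\<And>t. t \<in> {a..b} \<Longrightarrow> (X has_vector_derivative V t) (at t)"
    and V': "\<And>t. t \<in> {a..b} \<Longrightarrow> (V has_vector_derivative A t) (at t)"
    and bound: "\<And>t. t \<in> {a..b} \<Longrightarrow> norm (A t) \<le> K"
  shows "norm (V b - V a) \<le> K * (b - a)"
    and "norm (X b - X a - (b - a) *\<^sub>R V a) \<le> K * (b - a)\<^sup>2 / 2"
proof -
  have V_diff: "norm (V t - V a) \<le> K * (t - a)" if "t \<in> {a..b}" for t
    using norm_diff_le_power_majorant[of a t V A K 0] that V' bound by auto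
  then show "norm (V b - V a) \<le> K * (b - a)" using \<open>a \<le> b\<close> by simp
  have "((\<lambda>t. X t - X a - (t - a) *\<^sub>R V a) has_vector_derivative V t - V a) (at t)"
    if "t \<in> {a..b}" for t
    using X'[OF that] by (auto intro!: derivative_eq_intros)
  from norm_diff_le_power_majorant[OF \<open>a \<le> b\<close> this, of K 1] V_diff
  show "norm (X b - X a - (b - a) *\<^sub>R V a) \<le> K * (b - a)\<^sup>2 / 2"
    by (simp add: numeral_2_eq_2)
qed

definition integral_from_zero :: "(real \<Rightarrow> 'b::banach) \<Rightarrow> real \<Rightarrow> 'b" where
  "integral_from_zero G t = (if 0 \<le> t then integral {0..t} G else - integral {t..0} G)"

lemma integral_from_zero_0 [simp]: "integral_from_zero G 0 = 0"
  by (simp add: integral_from_zero_def)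

lemma has_vector_derivative_integral_from_zero:
  fixes G :: "real \<Rightarrow> 'b::banach"
  assumes "continuous_on UNIV G"
  shows "(integral_from_zero G has_vector_derivative G t) (at t)"
proof -
  define a where "a = min t 0 - 1"
  define b where "b = max t 0 + 1"
  have integrable: "G integrable_on {a..s}" for s
    using integrable_continuous_real[OF continuous_on_subset[OF assms]] by blast
  have eq: "integral {a..s} G - integral {a..0} G = integral_from_zero G s" if "s \<in> {a<..<b}" for s
  proof (cases "0 \<le> s")
    case True
    have "integral {a..0} G + integral {0..s} G = integral {a..s} G"
      by (rule Henstock_Kurzweil_Integration.integral_combine) (use True a_def that integrable in auto)
    then show ?thesis using True by (auto simp: integral_from_zero_def algebra_simps)
  next
    case False
    have "integral {a..s} G + integral {s..0} G = integral {a..0} G"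
      by (rule Henstock_Kurzweil_Integration.integral_combine) (use False a_def that integrable in auto)
    then show ?thesis using False by (auto simp: integral_from_zero_def algebra_simps)
  qed
  have t: "t \<in> {a..b}" "t \<in> {a<..<b}" by (auto simp: a_def b_def)
  have "((\<lambda>s. integral {a..s} G - integral {a..0} G) has_vector_derivative G t) (at t within {a..b})"
    using integral_has_vector_derivative[OF continuous_on_subset[OF assms] t(1)] by (auto intro!: derivative_eq_intros)
  then have "((\<lambda>s. integral {a..s} G - integral {a..0} G) has_vector_derivative G t) (at t)"
    using at_within_Icc_at[of a t b] t(2) by simp
  then show ?thesis
    by (rule has_vector_derivative_transform_within_open[OF _ _ t(2)]) (use eq in auto)
qed

section \<open>Global solutions of Lipschitz ODEs\<close>

lemma norm_le_exp_growth:
  fixes J :: "real \<Rightarrow> 'b::real_normed_vector"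
  assumes "J 0 = 0" and J': "\<And>s. (J has_vector_derivative J' s) (at s)"
    and bound: "\<And>s. norm (J' s) \<le> B * exp (c * \<bar>s\<bar>)" and "c > 0"
  shows "norm (J t) \<le> B / c * exp (c * \<bar>t\<bar>)"
proof -
  have "0 \<le> B / c" using order_trans[OF norm_ge_zero bound[of 0]] \<open>c > 0\<close> by simp
  show ?thesis
  proof (cases "0 \<le> t")
    case True
    have "norm (J t - J 0) \<le> B / c * exp (c * t) - B / c * exp (c * 0)"
    proof (rule norm_diff_le_majorant[OF True J'])
      fix s
      show "((\<lambda>s. B / c * exp (c * s)) has_real_derivative B * exp (c * s)) (at s)"
        using \<open>c > 0\<close> by (auto intro!: derivative_eq_intros)
      show "s \<in> {0..t} \<Longrightarrow> norm (J' s) \<le> B * exp (c * s)" using bound[of s] by simp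
    qed
    then show ?thesis using True \<open>J 0 = 0\<close> \<open>0 \<le> B / c\<close> by simp
  next
    case False
    have "norm (J 0 - J t) \<le> - B / c * exp (- c * 0) - (- B / c * exp (- c * t))"
    proof (rule norm_diff_le_majorant[OF _ J'])
      fix s
      show "((\<lambda>s. - B / c * exp (- c * s)) has_real_derivative B * exp (- c * s)) (at s)"
        using \<open>c > 0\<close> by (auto intro!: derivative_eq_intros)
      show "s \<in> {t..0} \<Longrightarrow> norm (J' s) \<le> B * exp (- c * s)" using bound[of s] by simp
    qed (use False in simp)
    then show ?thesis using False \<open>J 0 = 0\<close> \<open>0 \<le> B / c\<close> by (simp add: norm_minus_commute)
  qed
qed

text \<open>Picard operator for the rescaled unknown Z(t) = exp(-c|t|) Y(t) (Bielecki weight): for c large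
  compared with the Lipschitz constant it is a contraction in the sup norm on the whole real line.\<close>
definition picard_weighted :: "('b::banach \<Rightarrow> 'b) \<Rightarrow> real \<Rightarrow> 'b \<Rightarrow> (real \<Rightarrow>\<^sub>C 'b) \<Rightarrow> real \<Rightarrow> 'b" where
  "picard_weighted F c z0 Z t =
     exp (- c * \<bar>t\<bar>) *\<^sub>R (z0 + integral_from_zero (\<lambda>s. F (exp (c * \<bar>s\<bar>) *\<^sub>R Z s)) t)"

context
  fixes F :: "'b::banach \<Rightarrow> 'b" and K c :: real
  assumes lipschitz: "\<And>p q. norm (F p - F q) \<le> K * norm (p - q)"
    and K: "0 \<le> K" and c: "0 < c"
begin

lemma has_vector_derivative_weighted_integral:
  "(integral_from_zero (\<lambda>s. F (exp (c * \<bar>s\<bar>) *\<^sub>R apply_bcontfun Z s)) has_vector_derivative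
     F (exp (c * \<bar>t\<bar>) *\<^sub>R apply_bcontfun Z t)) (at t)"
proof (rule has_vector_derivative_integral_from_zero)
  have "continuous_on UNIV F"
    using lipschitz K by (intro lipschitz_on_continuous_on[of K]) (auto simp: lipschitz_on_def dist_norm)
  then show "continuous_on UNIV (\<lambda>s. F (exp (c * \<bar>s\<bar>) *\<^sub>R apply_bcontfun Z s))"
    by (rule continuous_on_compose2) (auto intro!: continuous_intros)
qed

lemma norm_weighted_integral_diff_le:
  "norm (integral_from_zero (\<lambda>s. F (exp (c * \<bar>s\<bar>) *\<^sub>R apply_bcontfun Z1 s)) t
       - integral_from_zero (\<lambda>s. F (exp (c * \<bar>s\<bar>) *\<^sub>R apply_bcontfun Z2 s)) t)
     \<le> K * dist Z1 Z2 / c * exp (c * \<bar>t\<bar>)"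
proof (rule norm_le_exp_growth[OF _ has_vector_derivative_diff[OF
      has_vector_derivative_weighted_integral has_vector_derivative_weighted_integral] _ c])
  fix s
  have "norm (F (exp (c * \<bar>s\<bar>) *\<^sub>R Z1 s) - F (exp (c * \<bar>s\<bar>) *\<^sub>R Z2 s))
      \<le> K * norm (exp (c * \<bar>s\<bar>) *\<^sub>R Z1 s - exp (c * \<bar>s\<bar>) *\<^sub>R Z2 s)"
    by (rule lipschitz)
  also have "\<dots> = K * (exp (c * \<bar>s\<bar>) * dist (Z1 s) (Z2 s))"
    by (simp add: dist_norm flip: scaleR_diff_right)
  also have "\<dots> \<le> K * (exp (c * \<bar>s\<bar>) * dist Z1 Z2)"
    using K by (intro mult_left_mono dist_bounded) auto
  finally show "norm (F (exp (c * \<bar>s\<bar>) *\<^sub>R Z1 s) - F (exp (c * \<bar>s\<bar>) *\<^sub>R Z2 s))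
      \<le> K * dist Z1 Z2 * exp (c * \<bar>s\<bar>)"
    by (simp add: mult_ac)
qed simp

lemma norm_weighted_integral_le:
  "norm (integral_from_zero (\<lambda>s. F (exp (c * \<bar>s\<bar>) *\<^sub>R apply_bcontfun Z s)) t)
     \<le> (norm (F 0) + K * norm Z) / c * exp (c * \<bar>t\<bar>)"
proof (rule norm_le_exp_growth[OF _ has_vector_derivative_weighted_integral _ c])
  fix s
  have "norm (F p) \<le> norm (F 0) + K * norm p" for p
    using lipschitz[of p 0] norm_triangle_ineq2[of "F p" "F 0"] by simp
  then have "norm (F (exp (c * \<bar>s\<bar>) *\<^sub>R Z s)) \<le> norm (F 0) + K * (exp (c * \<bar>s\<bar>) * norm (Z s))"
    by (metis abs_exp_cancel norm_scaleR)
  also have "\<dots> \<le> norm (F 0) * exp (c * \<bar>s\<bar>) + K * (exp (c * \<bar>s\<bar>) * norm Z)"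
    using c K norm_bounded[of Z s] mult_left_mono[of 1 "exp (c * \<bar>s\<bar>)" "norm (F 0)"]
    by (intro add_mono mult_left_mono) auto
  finally show "norm (F (exp (c * \<bar>s\<bar>) *\<^sub>R Z s)) \<le> (norm (F 0) + K * norm Z) * exp (c * \<bar>s\<bar>)"
    by (simp add: algebra_simps)
qed simp

lemma picard_weighted_in_bcontfun: "picard_weighted F c z0 Z \<in> bcontfun"
proof -
  define I where "I = integral_from_zero (\<lambda>s. F (exp (c * \<bar>s\<bar>) *\<^sub>R apply_bcontfun Z s))"
  have "continuous_on UNIV I"
    unfolding I_def
    by (intro continuous_at_imp_continuous_on ballI
        has_vector_derivative_continuous[OF has_vector_derivative_weighted_integral])
  then have "continuous_on UNIV (picard_weighted F c z0 Z)"
    unfolding picard_weighted_def I_def[symmetric] by (intro continuous_intros)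
  moreover have "norm (picard_weighted F c z0 Z t) \<le> norm z0 + (norm (F 0) + K * norm Z) / c" for t
  proof -
    have "norm (picard_weighted F c z0 Z t) \<le> exp (- c * \<bar>t\<bar>) * (norm z0 + norm (I t))"
      unfolding picard_weighted_def I_def[symmetric] norm_scaleR abs_exp_cancel
      by (intro mult_left_mono norm_triangle_ineq) simp
    also have "\<dots> \<le> exp (- c * \<bar>t\<bar>) * (norm z0 + (norm (F 0) + K * norm Z) / c * exp (c * \<bar>t\<bar>))"
      using norm_weighted_integral_le[of Z t] unfolding I_def by (intro mult_left_mono add_left_mono) auto
    also have "\<dots> = exp (- c * \<bar>t\<bar>) * norm z0 + (norm (F 0) + K * norm Z) / c"
      using exp_minus_inverse[of "c * \<bar>t\<bar>"] by (simp add: distrib_left mult.left_commute mult.commute)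
    also have "\<dots> \<le> norm z0 + (norm (F 0) + K * norm Z) / c"
      using c by (simp add: mult_left_le_one_le)
    finally show ?thesis .
  qed
  then have "bounded (range (picard_weighted F c z0 Z))"
    unfolding bounded_iff by blast
  ultimately show ?thesis unfolding bcontfun_def by simp
qed

lemma dist_picard_weighted_le:
  "dist (Bcontfun (picard_weighted F c z0 Z1)) (Bcontfun (picard_weighted F c z0 Z2)) \<le> K / c * dist Z1 Z2"
proof (rule dist_bound)
  fix t
  have "picard_weighted F c z0 Z1 t - picard_weighted F c z0 Z2 t
      = exp (- c * \<bar>t\<bar>) *\<^sub>R
          (integral_from_zero (\<lambda>s. F (exp (c * \<bar>s\<bar>) *\<^sub>R apply_bcontfun Z1 s)) t
           - integral_from_zero (\<lambda>s. F (exp (c * \<bar>s\<bar>) *\<^sub>R apply_bcontfun Z2 s)) t)"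
    unfolding picard_weighted_def scaleR_diff_right scaleR_add_right by simp
  then have "dist (picard_weighted F c z0 Z1 t) (picard_weighted F c z0 Z2 t)
      = exp (- c * \<bar>t\<bar>) *
          norm (integral_from_zero (\<lambda>s. F (exp (c * \<bar>s\<bar>) *\<^sub>R apply_bcontfun Z1 s)) t
           - integral_from_zero (\<lambda>s. F (exp (c * \<bar>s\<bar>) *\<^sub>R apply_bcontfun Z2 s)) t)"
    by (simp add: dist_norm)
  also have "\<dots> \<le> exp (- c * \<bar>t\<bar>) * (K * dist Z1 Z2 / c * exp (c * \<bar>t\<bar>))"
    by (intro mult_left_mono norm_weighted_integral_diff_le) simp
  also have "\<dots> = K / c * dist Z1 Z2"
    using exp_minus_inverse[of "c * \<bar>t\<bar>"] by (simp add: mult.commute mult.left_commute)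
  finally show "dist (Bcontfun (picard_weighted F c z0 Z1) t) (Bcontfun (picard_weighted F c z0 Z2) t)
      \<le> K / c * dist Z1 Z2"
    by (simp add: Bcontfun_inverse picard_weighted_in_bcontfun)
qed

end

lemma lipschitz_ode_global_solution:
  fixes F :: "'b::banach \<Rightarrow> 'b"
  assumes lipschitz: "\<And>p q. norm (F p - F q) \<le> K * norm (p - q)" and "0 \<le> K"
  shows "\<exists>Y. Y 0 = z0 \<and> (\<forall>t. (Y has_vector_derivative F (Y t)) (at t))"
proof -
  define c where "c = 2 * K + 1"
  have c: "0 < c" "0 \<le> K / c" "K / c < 1"
    using \<open>0 \<le> K\<close> by (simp_all add: c_def divide_less_eq)
  note picard = has_vector_derivative_weighted_integral[OF lipschitz \<open>0 \<le> K\<close> c(1)]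
    dist_picard_weighted_le[OF lipschitz \<open>0 \<le> K\<close> c(1)]
    picard_weighted_in_bcontfun[OF lipschitz \<open>0 \<le> K\<close> c(1)]
  obtain Z where Z: "Bcontfun (picard_weighted F c z0 Z) = Z"
    using banach_fix_type[OF c(2,3), of "\<lambda>Z. Bcontfun (picard_weighted F c z0 Z)"] picard(2)
    by blast
  define Y where "Y t = z0 + integral_from_zero (\<lambda>s. F (exp (c * \<bar>s\<bar>) *\<^sub>R apply_bcontfun Z s)) t" for t
  have "apply_bcontfun Z t = exp (- c * \<bar>t\<bar>) *\<^sub>R Y t" for t
    using arg_cong[OF Z, of "\<lambda>Z. apply_bcontfun Z t"]
    by (simp add: Bcontfun_inverse picard(3) picard_weighted_def Y_def)
  then have Y: "exp (c * \<bar>t\<bar>) *\<^sub>R apply_bcontfun Z t = Y t" for t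
    by (simp add: exp_minus_inverse)
  have "(Y has_vector_derivative F (exp (c * \<bar>t\<bar>) *\<^sub>R apply_bcontfun Z t)) (at t)" for t
    unfolding Y_def[abs_def] by (rule has_vector_derivative_add[OF has_vector_derivative_const picard(1), simplified])
  then have "(Y has_vector_derivative F (Y t)) (at t)" for t
    by (simp only: Y)
  moreover have "Y 0 = z0" by (simp add: Y_def)
  ultimately show ?thesis by blast
qed

section \<open>Discrete Gronwall estimate\<close>

lemma error_recursion_bounds:
  fixes e f :: "nat \<Rightarrow> real"
  assumes "e 0 = 0" "f 0 = 0" and "0 \<le> h" "0 \<le> L"
    and e_step: "\<And>j. j < N \<Longrightarrow> e (Suc j) \<le> e j + h * f j + h\<^sup>2 / 2 * L * e j + \<tau>"
    and f_step: "\<And>j. j < N \<Longrightarrow> f (Suc j) \<le> f j + h / 2 * L * (e j + e (Suc j)) + \<sigma>"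
    and le_E: "\<And>j. j \<le> N \<Longrightarrow> e j \<le> E"
    and "j \<le> N"
  shows "e j \<le> j * \<tau> + h * \<sigma> * j * (real j - 1) / 2 + h\<^sup>2 * L * E * (real j)\<^sup>2 / 2"
proof -
  have hL: "0 \<le> h * L" using \<open>0 \<le> h\<close> \<open>0 \<le> L\<close> by simp
  have f_le: "f j \<le> j * \<sigma> + j * (h * L) * E" if "j \<le> N" for j
    using that
  proof (induction j)
    case (Suc j)
    have "h / 2 * L * (e j + e (Suc j)) \<le> h / 2 * L * (E + E)"
      using le_E[of j] le_E[of "Suc j"] Suc.prems hL by (intro mult_left_mono add_mono) auto
    moreover have "Suc j * \<sigma> + Suc j * (h * L) * E = (j * \<sigma> + j * (h * L) * E) + h / 2 * L * (E + E) + \<sigma>"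
      by (simp add: algebra_simps)
    ultimately show ?case using f_step[of j] Suc by linarith
  qed (simp add: \<open>f 0 = 0\<close>)
  show "e j \<le> j * \<tau> + h * \<sigma> * j * (real j - 1) / 2 + h\<^sup>2 * L * E * (real j)\<^sup>2 / 2"
    using \<open>j \<le> N\<close>
  proof (induction j)
    case (Suc j)
    have "h * f j \<le> h * (j * \<sigma> + j * (h * L) * E)"
      using f_le[of j] Suc.prems \<open>0 \<le> h\<close> by (intro mult_left_mono) auto
    moreover have "h\<^sup>2 / 2 * L * e j \<le> h\<^sup>2 / 2 * L * E"
      using le_E[of j] Suc.prems \<open>0 \<le> L\<close> by (intro mult_left_mono) auto
    ultimately show ?case
      using e_step[of j] Suc by (simp add: field_simps power2_eq_square)
  qed (simp add: \<open>e 0 = 0\<close>)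
qed

text \<open>Bounding the errors e j by their maximum E over the grid decouples the recursion; the
  contribution of E to its own bound is then at most E/24 because L (N h)^2 \<le> 1/12.\<close>

lemma error_recursion_le:
  fixes e f :: "nat \<Rightarrow> real"
  assumes "e 0 = 0" "f 0 = 0" and "0 \<le> h" "0 \<le> L" "0 \<le> \<tau>" "0 \<le> \<sigma>"
    and e_step: "\<And>j. j < N \<Longrightarrow> e (Suc j) \<le> e j + h * f j + h\<^sup>2 / 2 * L * e j + \<tau>"
    and f_step: "\<And>j. j < N \<Longrightarrow> f (Suc j) \<le> f j + h / 2 * L * (e j + e (Suc j)) + \<sigma>"
    and small: "L * (N * h)\<^sup>2 \<le> 1/12"
  shows "e N \<le> 24/23 * (N * \<tau> + h * \<sigma> * (real N)\<^sup>2 / 2)"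
proof -
  define Q where "Q = N * \<tau> + h * \<sigma> * (real N)\<^sup>2 / 2"
  define E where "E = Max (e ` {..N})"
  have le_E: "e j \<le> E" if "j \<le> N" for j
    unfolding E_def using that by (intro Max_ge) auto
  have "E \<in> e ` {..N}"
    unfolding E_def by (intro Max_in) auto
  then obtain m where "m \<le> N" and "E = e m"
    by auto
  have "0 \<le> E" using le_E[of 0] \<open>e 0 = 0\<close> by simp
  have "E \<le> m * \<tau> + h * \<sigma> * m * (real m - 1) / 2 + h\<^sup>2 * L * E * (real m)\<^sup>2 / 2"
    using error_recursion_bounds[OF assms(1-4) e_step f_step le_E \<open>m \<le> N\<close>] \<open>E = e m\<close> by simp
  also have "m * \<tau> \<le> N * \<tau>"
    using \<open>m \<le> N\<close> \<open>0 \<le> \<tau>\<close> by (intro mult_right_mono) auto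
  also have "h * \<sigma> * m * (real m - 1) / 2 \<le> h * \<sigma> * (real N)\<^sup>2 / 2"
  proof -
    have "real m * (real m - 1) \<le> real N * N"
      using mult_mono[of "real m" "real N" "real m" "real N"] \<open>m \<le> N\<close> by (simp add: right_diff_distrib)
    then have "h * \<sigma> * (real m * (real m - 1)) \<le> h * \<sigma> * (real N * N)"
      using \<open>0 \<le> h\<close> \<open>0 \<le> \<sigma>\<close> by (intro mult_left_mono) auto
    from divide_right_mono[OF this, of 2] show ?thesis
      by (simp add: power2_eq_square mult.assoc)
  qed
  also have "h\<^sup>2 * L * E * (real m)\<^sup>2 / 2 \<le> E / 24"
  proof -
    have "L * (m * h)\<^sup>2 \<le> L * (N * h)\<^sup>2"
      using \<open>m \<le> N\<close> \<open>0 \<le> h\<close> \<open>0 \<le> L\<close> by (intro mult_left_mono power_mono mult_right_mono) auto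
    then have "L * (m * h)\<^sup>2 * E \<le> 1/12 * E"
      using small \<open>0 \<le> E\<close> by (intro mult_right_mono) auto
    then show ?thesis by (simp add: power_mult_distrib mult_ac)
  qed
  finally have "E \<le> Q + E / 24"
    by (simp add: Q_def)
  then show ?thesis
    using le_E[of N] by (simp add: Q_def[symmetric])
qed

section \<open>The Hamiltonian flow\<close>

locale hamiltonian_field =
  fixes g :: "'a::euclidean_space \<Rightarrow> 'a" and H :: "'a \<Rightarrow> ('a \<Rightarrow>\<^sub>L 'a)"
    and D3 :: "'a \<Rightarrow> ('a \<Rightarrow>\<^sub>L ('a \<Rightarrow>\<^sub>L 'a))" and L M :: real
  assumes hessian: "\<And>z. (g has_derivative blinfun_apply (H z)) (at z)"
    and third: "\<And>z. (H has_derivative blinfun_apply (D3 z)) (at z)"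
    and norm_hessian_le: "\<And>z. norm (H z) \<le> L"
    and norm_third_le: "\<And>z. norm (D3 z) \<le> M"
    and g_0: "g 0 = 0"
begin

lemma L_nonneg: "0 \<le> L"
  using order_trans[OF norm_ge_zero norm_hessian_le] .

lemma M_nonneg: "0 \<le> M"
  using order_trans[OF norm_ge_zero norm_third_le] .

lemma g_lipschitz: "norm (g a - g b) \<le> L * norm (a - b)"
  by (rule differentiable_bound[of UNIV g "\<lambda>z. blinfun_apply (H z)" L a b])
     (use hessian norm_hessian_le in \<open>auto simp flip: norm_blinfun.rep_eq intro: has_derivative_at_withinI\<close>)

lemma norm_g_le: "norm (g a) \<le> L * norm a"
  using g_lipschitz[of a 0] by (simp add: g_0)

lemma ham_solD:
  assumes "ham_sol g x v X V"
  shows "X 0 = x" "V 0 = v" "(X has_vector_derivative V s) (at s)"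
    "(V has_vector_derivative - g (X s)) (at s)"
  using assms by (auto simp: ham_sol_def)

lemma ham_sol_exists: "\<exists>X V. ham_sol g x v X V"
proof -
  define F where "F p = (snd p, - g (fst p))" for p :: "'a \<times> 'a"
  have "norm (F p - F q) \<le> (1 + L) * norm (p - q)" for p q
  proof -
    have "norm (F p - F q) \<le> norm (snd p - snd q) + norm (g (fst p) - g (fst q))"
      using norm_Pair_le[of "snd p - snd q" "- (g (fst p) - g (fst q))"] by (simp add: F_def norm_minus_commute)
    also have "\<dots> \<le> norm (p - q) + L * norm (p - q)"
    proof (intro add_mono order_trans[OF g_lipschitz] mult_left_mono L_nonneg)
      show "norm (snd p - snd q) \<le> norm (p - q)"
        by (metis norm_snd_le prod.collapse snd_diff)
      show "norm (fst p - fst q) \<le> norm (p - q)"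
        by (metis norm_fst_le prod.collapse fst_diff)
    qed
    finally show ?thesis by (simp add: algebra_simps)
  qed
  then obtain Y where "Y 0 = (x, v)" and Y': "\<And>t. (Y has_vector_derivative F (Y t)) (at t)"
    using lipschitz_ode_global_solution[of F "1 + L" "(x, v)"] L_nonneg by auto
  moreover have "((\<lambda>t. fst (Y t)) has_vector_derivative snd (Y t)) (at t)"
    and "((\<lambda>t. snd (Y t)) has_vector_derivative - g (fst (Y t))) (at t)" for t
    using bounded_linear.has_vector_derivative[OF bounded_linear_fst Y'[of t]]
      bounded_linear.has_vector_derivative[OF bounded_linear_snd Y'[of t]]
    by (simp_all add: F_def)
  ultimately have "ham_sol g x v (\<lambda>t. fst (Y t)) (\<lambda>t. snd (Y t))"
    by (simp add: ham_sol_def)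
  then show ?thesis by blast
qed

lemma ham_sol_zero: "ham_sol g 0 0 (\<lambda>_. 0) (\<lambda>_. 0)"
  by (simp add: ham_sol_def g_0)

lemma ham_sol_diff_derivatives:
  assumes sol1: "ham_sol g x1 v1 X1 V1" and sol2: "ham_sol g x2 v2 X2 V2"
  shows "((\<lambda>u. X1 u - X2 u) has_vector_derivative V1 u - V2 u) (at u)"
    and "((\<lambda>u. V1 u - V2 u) has_vector_derivative - g (X1 u) - - g (X2 u)) (at u)"
    and "norm (- g (X1 u) - - g (X2 u)) \<le> L * norm (X1 u - X2 u)"
proof -
  show "((\<lambda>u. X1 u - X2 u) has_vector_derivative V1 u - V2 u) (at u)"
    by (intro has_vector_derivative_diff ham_solD(3)[OF sol1] ham_solD(3)[OF sol2])
  show "((\<lambda>u. V1 u - V2 u) has_vector_derivative - g (X1 u) - - g (X2 u)) (at u)"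
    by (intro has_vector_derivative_diff ham_solD(4)[OF sol1] ham_solD(4)[OF sol2])
  show "norm (- g (X1 u) - - g (X2 u)) \<le> L * norm (X1 u - X2 u)"
    using g_lipschitz[of "X2 u" "X1 u"] by (simp add: norm_minus_commute)
qed

text \<open>While L t0^2 \<le> 1/12, applying the second-order remainder estimate at a point where the
  distance of two solutions is maximal shows that this distance is dominated by its linear part.\<close>

lemma ham_sol_diff_le:
  assumes sol1: "ham_sol g x1 v1 X1 V1" and sol2: "ham_sol g x2 v2 X2 V2"
    and "0 \<le> t0" and small: "L * t0\<^sup>2 \<le> 1/12" and "s \<in> {0..t0}"
  shows "norm (X1 s - X2 s) \<le> 24/23 * (norm (x1 - x2) + t0 * norm (v1 - v2))"
proof -
  define A where "A = norm (x1 - x2) + t0 * norm (v1 - v2)"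
  have "continuous_on {0..t0} (\<lambda>s. norm (X1 s - X2 s))"
    using ham_solD(3)[OF sol1] ham_solD(3)[OF sol2]
    by (intro continuous_intros continuous_at_imp_continuous_on ballI has_vector_derivative_continuous)
  then obtain r where r: "r \<in> {0..t0}" and max: "\<And>s. s \<in> {0..t0} \<Longrightarrow> norm (X1 s - X2 s) \<le> norm (X1 r - X2 r)"
    using continuous_attains_sup[of "{0..t0}" "\<lambda>s. norm (X1 s - X2 s)"] \<open>0 \<le> t0\<close> by auto
  define S where "S = norm (X1 r - X2 r)"
  have "norm (X1 r - X2 r - (X1 0 - X2 0) - (r - 0) *\<^sub>R (V1 0 - V2 0)) \<le> L * S * (r - 0)\<^sup>2 / 2"
  proof (rule second_order_remainder(2)[OF _ ham_sol_diff_derivatives(1,2)[OF sol1 sol2]])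
    fix u assume "u \<in> {0..r}"
    then show "norm (- g (X1 u) - - g (X2 u)) \<le> L * S"
      using ham_sol_diff_derivatives(3)[OF sol1 sol2, of u] max[of u] r L_nonneg
      by (auto simp: S_def intro: order_trans mult_left_mono)
  qed (use r in simp)
  moreover have "L * S * r\<^sup>2 / 2 \<le> S / 24"
  proof -
    have "L * r\<^sup>2 \<le> L * t0\<^sup>2" using r L_nonneg by (intro mult_left_mono power_mono) auto
    then have "L * r\<^sup>2 \<le> 1/12" using small by simp
    then show ?thesis using mult_right_mono[of "L * r\<^sup>2" "1/12" S] by (simp add: S_def mult_ac)
  qed
  moreover have "S \<le> norm (X1 r - X2 r - (x1 - x2) - r *\<^sub>R (v1 - v2)) + norm (x1 - x2) + r * norm (v1 - v2)"
    using norm_triangle_ineq[of "X1 r - X2 r - (x1 - x2) - r *\<^sub>R (v1 - v2) + (x1 - x2)" "r *\<^sub>R (v1 - v2)"]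
      norm_triangle_ineq[of "X1 r - X2 r - (x1 - x2) - r *\<^sub>R (v1 - v2)" "x1 - x2"] r
    by (simp add: S_def)
  moreover have "r * norm (v1 - v2) \<le> t0 * norm (v1 - v2)"
    using r by (simp add: mult_right_mono)
  ultimately have "S \<le> A + S / 24"
    by (simp add: ham_solD[OF sol1] ham_solD[OF sol2] A_def)
  then show ?thesis using max[OF \<open>s \<in> {0..t0}\<close>] by (simp add: S_def A_def)
qed

lemma ham_sol_diff_remainders:
  assumes sol1: "ham_sol g x1 v1 X1 V1" and sol2: "ham_sol g x2 v2 X2 V2"
    and "0 \<le> t0" and small: "L * t0\<^sup>2 \<le> 1/12" and s: "s \<in> {0..t0}"
  defines "B \<equiv> 24/23 * (norm (x1 - x2) + t0 * norm (v1 - v2))"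
  shows "norm (V1 s - V2 s - (v1 - v2)) \<le> L * B * s"
    and "norm (X1 s - X2 s - (x1 - x2) - s *\<^sub>R (v1 - v2)) \<le> L * B * s\<^sup>2 / 2"
proof -
  have "0 \<le> s" using s by simp
  note remainder = second_order_remainder[OF this ham_sol_diff_derivatives(1,2)[OF sol1 sol2], of "L * B"]
  have "norm (- g (X1 u) - - g (X2 u)) \<le> L * B" if "u \<in> {0..s}" for u
  proof -
    have "norm (X1 u - X2 u) \<le> B"
      using ham_sol_diff_le[OF sol1 sol2 \<open>0 \<le> t0\<close> small, of u] that s by (simp add: B_def)
    then show ?thesis
      using ham_sol_diff_derivatives(3)[OF sol1 sol2, of u] L_nonneg
      by (meson mult_left_mono order_trans)
  qed
  from remainder[OF this] show "norm (V1 s - V2 s - (v1 - v2)) \<le> L * B * s"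
    and "norm (X1 s - X2 s - (x1 - x2) - s *\<^sub>R (v1 - v2)) \<le> L * B * s\<^sup>2 / 2"
    by (simp_all add: ham_solD[OF sol1] ham_solD[OF sol2])
qed

lemma ham_sol_linearization_le:
  assumes sol1: "ham_sol g x1 v1 X1 V1" and sol2: "ham_sol g x2 v2 X2 V2"
    and "0 \<le> t0" and small: "L * t0\<^sup>2 \<le> 1/12"
  shows "norm (X1 t0 - X2 t0 - (x1 - x2) - t0 *\<^sub>R (v1 - v2))
    \<le> (norm (x1 - x2) + t0 * norm (v1 - v2)) / 23"
proof -
  define A where "A = norm (x1 - x2) + t0 * norm (v1 - v2)"
  have "0 \<le> A" using \<open>0 \<le> t0\<close> by (simp add: A_def)
  have "norm (X1 t0 - X2 t0 - (x1 - x2) - t0 *\<^sub>R (v1 - v2)) \<le> L * (24/23 * A) * t0\<^sup>2 / 2"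
    using ham_sol_diff_remainders(2)[OF sol1 sol2 \<open>0 \<le> t0\<close> small, of t0] \<open>0 \<le> t0\<close>
    by (simp add: A_def)
  also have "\<dots> = (L * t0\<^sup>2) * (12/23 * A)"
    by (simp add: algebra_simps)
  also have "\<dots> \<le> 1/12 * (12/23 * A)"
    using small \<open>0 \<le> A\<close> by (intro mult_right_mono) auto
  finally show ?thesis by (simp add: A_def)
qed

lemma ham_q_eqI:
  assumes sol: "ham_sol g x v X V" and "0 \<le> t" and "L * t\<^sup>2 \<le> 1/12"
  shows "ham_q g t x v = X t"
  unfolding ham_q_def
proof (rule the_equality)
  show "\<exists>X' V'. ham_sol g x v X' V' \<and> X' t = X t" using sol by blast
  fix p assume "\<exists>X' V'. ham_sol g x v X' V' \<and> X' t = p"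
  then obtain X' V' where sol': "ham_sol g x v X' V'" and "X' t = p" by blast
  with ham_sol_linearization_le[OF sol' sol assms(2,3)] show "p = X t" by simp
qed

lemma ham_sol_bounds:
  assumes sol: "ham_sol g x v X V" and "0 \<le> T" and small: "L * T\<^sup>2 \<le> 1/12" and t: "t \<in> {0..T}"
  defines "Xm \<equiv> 24/23 * (norm x + T * norm v)"
  shows "norm (X t) \<le> Xm" and "norm (V t) \<le> norm v + L * T * Xm"
proof -
  show "norm (X t) \<le> Xm"
    using ham_sol_diff_le[OF sol ham_sol_zero \<open>0 \<le> T\<close> small t] by (simp add: Xm_def)
  have "norm (V t - v) \<le> L * Xm * t"
    using ham_sol_diff_remainders(1)[OF sol ham_sol_zero \<open>0 \<le> T\<close> small t] by (simp add: Xm_def)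
  also have "\<dots> \<le> L * Xm * T"
    using t L_nonneg \<open>0 \<le> T\<close> by (intro mult_left_mono) (auto simp: Xm_def)
  finally show "norm (V t) \<le> norm v + L * T * Xm"
    using norm_triangle_ineq2[of "V t" v] by (simp add: mult_ac)
qed

end

section \<open>Velocity Verlet\<close>

context hamiltonian_field
begin

lemma verlet_position_defect_le:
  assumes sol: "ham_sol g x v X V" and "0 \<le> h"
    and V_le: "\<And>t. t \<in> {a..a+h} \<Longrightarrow> norm (V t) \<le> Vm"
  shows "norm (X (a + h) - X a - h *\<^sub>R V a + (h\<^sup>2 / 2) *\<^sub>R g (X a)) \<le> L * Vm * h ^ 3 / 6"
proof -
  note sol' = ham_solD(3,4)[OF sol]
  have X_diff: "norm (X t - X a) \<le> Vm * (t - a)" if "t \<in> {a..a+h}" for t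
    using norm_diff_le_power_majorant[of a t X V Vm 0] sol' V_le that by auto
  have V_rem: "norm (V t - V a + (t - a) *\<^sub>R g (X a)) \<le> L * Vm * (t - a)\<^sup>2 / 2"
    if "t \<in> {a..a+h}" for t
  proof -
    have deriv: "((\<lambda>t. V t - V a + (t - a) *\<^sub>R g (X a)) has_vector_derivative - g (X u) + g (X a)) (at u)" for u
      using sol' by (auto intro!: derivative_eq_intros)
    have bound: "norm (- g (X u) + g (X a)) \<le> L * Vm * (u - a) ^ 1" if "u \<in> {a..t}" for u
      using g_lipschitz[of "X a" "X u"] X_diff[of u] that \<open>t \<in> {a..a+h}\<close> L_nonneg
      by (auto simp: norm_minus_commute mult.assoc intro: order_trans mult_left_mono)
    show ?thesis
      using norm_diff_le_power_majorant[OF _ deriv bound] that by (simp add: numeral_2_eq_2)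
  qed
  have "((\<lambda>t. X t - X a - (t - a) *\<^sub>R V a + ((t - a)\<^sup>2 / 2) *\<^sub>R g (X a))
      has_vector_derivative V u - V a + (u - a) *\<^sub>R g (X a)) (at u)" for u
    using sol' by (auto intro!: derivative_eq_intros)
  from norm_diff_le_power_majorant[of a "a + h", OF _ this, of "L * Vm / 2" 2] V_rem \<open>0 \<le> h\<close>
  show ?thesis by (simp add: power2_eq_square)
qed

lemma has_vector_derivative_grad_along:
  assumes sol: "ham_sol g x v X V"
  shows "((\<lambda>t. g (X t)) has_vector_derivative H (X t) (V t)) (at t)"
  using has_derivative_compose[OF ham_solD(3)[OF sol, unfolded has_vector_derivative_def] hessian]
  by (simp add: has_vector_derivative_def blinfun.scaleR_right)

lemma has_vector_derivative_hessian_along: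
  assumes sol: "ham_sol g x v X V"
  shows "((\<lambda>t. H (X t) (V t)) has_vector_derivative H (X t) (- g (X t)) + D3 (X t) (V t) (V t)) (at t)"
proof -
  have "((\<lambda>t. H (X t)) has_vector_derivative D3 (X t) (V t)) (at t)"
    using has_derivative_compose[OF ham_solD(3)[OF sol, unfolded has_vector_derivative_def] third]
    by (simp add: has_vector_derivative_def blinfun.scaleR_right)
  from bounded_bilinear.has_vector_derivative[OF bounded_bilinear_blinfun_apply this ham_solD(4)[OF sol]]
  show ?thesis .
qed

lemma norm_hessian_along_derivative_le:
  assumes "norm z \<le> Xm" and "norm w \<le> Vm"
  shows "norm (H z (- g z) + D3 z w w) \<le> M * Vm\<^sup>2 + L * L * Xm"
proof -
  have "0 \<le> Vm" using order_trans[OF norm_ge_zero assms(2)] .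
  have "norm (g z) \<le> L * Xm"
    using norm_g_le[of z] mult_left_mono[OF assms(1) L_nonneg] by linarith
  have "norm (H z (- g z)) \<le> norm (H z) * norm (g z)"
    using norm_blinfun[of "H z" "- g z"] by simp
  also have "\<dots> \<le> L * (L * Xm)"
    by (intro mult_mono norm_hessian_le \<open>norm (g z) \<le> L * Xm\<close> L_nonneg norm_ge_zero)
  finally have "norm (H z (- g z)) \<le> L * (L * Xm)" .
  moreover have "norm (D3 z w w) \<le> norm (D3 z) * norm w * norm w"
    using norm_blinfun[of "D3 z w" w] mult_right_mono[OF norm_blinfun[of "D3 z" w] norm_ge_zero[of w]]
    by linarith
  moreover have "norm (D3 z) * norm w * norm w \<le> M * Vm * Vm"
    using M_nonneg \<open>0 \<le> Vm\<close> by (intro mult_mono norm_third_le assms(2)) auto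
  ultimately show ?thesis
    using norm_triangle_ineq[of "H z (- g z)" "D3 z w w"] by (simp add: power2_eq_square mult_ac)
qed

text \<open>The trapezoidal velocity update has a third-order defect: with phi t = g (X t), the error
  e t = V t - V a + ((t - a)/2) (phi a + phi t) satisfies e a = e' a = 0 and
  e'' t = ((t - a)/2) phi'' t.\<close>

lemma verlet_velocity_defect_le:
  assumes sol: "ham_sol g x v X V" and "0 \<le> h"
    and V_le: "\<And>t. t \<in> {a..a+h} \<Longrightarrow> norm (V t) \<le> Vm"
    and X_le: "\<And>t. t \<in> {a..a+h} \<Longrightarrow> norm (X t) \<le> Xm"
  shows "norm (V (a + h) - V a + (h / 2) *\<^sub>R (g (X a) + g (X (a + h))))
    \<le> (M * Vm\<^sup>2 + L * L * Xm) * h ^ 3 / 12"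
proof -
  define K where "K = M * Vm\<^sup>2 + L * L * Xm"
  define e' where "e' t = (1/2) *\<^sub>R (g (X a) - g (X t)) + ((t - a) / 2) *\<^sub>R H (X t) (V t)" for t
  note grad' = has_vector_derivative_grad_along[OF sol]
  have half: "((\<lambda>t. (t - a) / 2) has_real_derivative 1 / 2) (at t)" for t
    by (auto intro!: derivative_eq_intros)
  have "((\<lambda>t. V t - V a + ((t - a) / 2) *\<^sub>R (g (X a) + g (X t))) has_vector_derivative
      - g (X t) - 0 + (((t - a) / 2) *\<^sub>R (0 + H (X t) (V t)) + (1 / 2) *\<^sub>R (g (X a) + g (X t)))) (at t)" for t
    by (intro has_vector_derivative_add has_vector_derivative_diff ham_solD(4)[OF sol]
        has_vector_derivative_const has_vector_derivative_scaleR half grad')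
  then have deriv: "((\<lambda>t. V t - V a + ((t - a) / 2) *\<^sub>R (g (X a) + g (X t))) has_vector_derivative e' t) (at t)" for t
    by (rule has_vector_derivative_eq_rhs) (simp add: e'_def algebra_simps flip: scaleR_add_left)
  have "(e' has_vector_derivative (1/2) *\<^sub>R (0 - H (X t) (V t))
      + (((t - a) / 2) *\<^sub>R (H (X t) (- g (X t)) + D3 (X t) (V t) (V t)) + (1 / 2) *\<^sub>R H (X t) (V t))) (at t)" for t
    unfolding e'_def[abs_def]
    by (intro has_vector_derivative_add has_vector_derivative_diff has_vector_derivative_const
        has_vector_derivative_scaleR half grad' has_vector_derivative_hessian_along[OF sol]
        bounded_linear.has_vector_derivative[OF bounded_linear_scaleR_right])
  then have deriv': "(e' has_vector_derivative ((t - a) / 2) *\<^sub>R (H (X t) (- g (X t)) + D3 (X t) (V t) (V t))) (at t)" for t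
    by (rule has_vector_derivative_eq_rhs) (simp add: algebra_simps)
  have e'_le: "norm (e' t) \<le> K / 2 * (t - a)\<^sup>2 / 2" if "t \<in> {a..a+h}" for t
  proof -
    have "norm (((u - a) / 2) *\<^sub>R (H (X u) (- g (X u)) + D3 (X u) (V u) (V u))) \<le> K / 2 * (u - a) ^ 1"
      if "u \<in> {a..t}" for u
    proof -
      have "u \<in> {a..a+h}" using that \<open>t \<in> {a..a+h}\<close> by auto
      then have "(u - a) / 2 * norm (H (X u) (- g (X u)) + D3 (X u) (V u) (V u)) \<le> (u - a) / 2 * K"
        unfolding K_def by (intro mult_left_mono norm_hessian_along_derivative_le X_le V_le) auto
      then show ?thesis using that by (simp add: mult.commute)
    qed
    from norm_diff_le_power_majorant[OF _ deriv' this] that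
    show ?thesis by (simp add: e'_def numeral_2_eq_2)
  qed
  from norm_diff_le_power_majorant[of a "a + h", OF _ deriv, of "K / 4" 2] e'_le \<open>0 \<le> h\<close>
  show ?thesis by (simp add: K_def power2_eq_square)
qed

lemma verlet_position_error_step:
  assumes "0 \<le> h" and defect: "norm (X' - X - h *\<^sub>R V + (h\<^sup>2 / 2) *\<^sub>R g X) \<le> \<tau>"
  shows "norm (x + h *\<^sub>R v - (h\<^sup>2 / 2) *\<^sub>R g x - X')
    \<le> norm (x - X) + h * norm (v - V) + h\<^sup>2 / 2 * L * norm (x - X) + \<tau>"
proof -
  define d where "d = X' - X - h *\<^sub>R V + (h\<^sup>2 / 2) *\<^sub>R g X"
  have eq: "x + h *\<^sub>R v - (h\<^sup>2 / 2) *\<^sub>R g x - X' = (x - X) + h *\<^sub>R (v - V) - (h\<^sup>2 / 2) *\<^sub>R (g x - g X) - d"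
    by (simp add: d_def algebra_simps)
  have "norm ((h\<^sup>2 / 2) *\<^sub>R (g x - g X)) \<le> h\<^sup>2 / 2 * L * norm (x - X)"
    using g_lipschitz[of x X] by (simp add: mult_left_mono mult.assoc)
  moreover have "norm (h *\<^sub>R (v - V)) = h * norm (v - V)" using \<open>0 \<le> h\<close> by simp
  moreover have "norm d \<le> \<tau>" using defect by (simp add: d_def)
  ultimately show ?thesis
    unfolding eq
    using norm_triangle_ineq4[of "(x - X) + h *\<^sub>R (v - V) - (h\<^sup>2 / 2) *\<^sub>R (g x - g X)" d]
      norm_triangle_ineq4[of "(x - X) + h *\<^sub>R (v - V)" "(h\<^sup>2 / 2) *\<^sub>R (g x - g X)"]
      norm_triangle_ineq[of "x - X" "h *\<^sub>R (v - V)"]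
    by linarith
qed

lemma verlet_velocity_error_step:
  assumes "0 \<le> h" and defect: "norm (V' - V + (h / 2) *\<^sub>R (g X + g X')) \<le> \<sigma>"
  shows "norm (v - (h / 2) *\<^sub>R (g x + g x') - V')
    \<le> norm (v - V) + h / 2 * L * (norm (x - X) + norm (x' - X')) + \<sigma>"
proof -
  define d where "d = V' - V + (h / 2) *\<^sub>R (g X + g X')"
  have eq: "v - (h / 2) *\<^sub>R (g x + g x') - V' = (v - V) - (h / 2) *\<^sub>R ((g x - g X) + (g x' - g X')) - d"
    by (simp add: d_def algebra_simps)
  have "norm ((g x - g X) + (g x' - g X')) \<le> L * (norm (x - X) + norm (x' - X'))"
    using norm_triangle_ineq[of "g x - g X" "g x' - g X'"] g_lipschitz[of x X] g_lipschitz[of x' X']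
    by (simp add: distrib_left)
  then have "norm ((h / 2) *\<^sub>R ((g x - g X) + (g x' - g X'))) \<le> h / 2 * L * (norm (x - X) + norm (x' - X'))"
    using \<open>0 \<le> h\<close> by (simp add: mult_left_mono mult.assoc)
  moreover have "norm d \<le> \<sigma>" using defect by (simp add: d_def)
  ultimately show ?thesis
    unfolding eq
    using norm_triangle_ineq4[of "(v - V) - (h / 2) *\<^sub>R ((g x - g X) + (g x' - g X'))" d]
      norm_triangle_ineq4[of "v - V" "(h / 2) *\<^sub>R ((g x - g X) + (g x' - g X'))"]
    by linarith
qed

lemma vv_step_iterate_error:
  fixes h :: real and N :: nat
  assumes sol: "ham_sol g x v X V" and "0 \<le> h" and small: "L * (N * h)\<^sup>2 \<le> 1/12"
  defines "Xm \<equiv> 24/23 * (norm x + N * h * norm v)"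
  defines "Vm \<equiv> norm v + L * (N * h) * Xm"
  shows "norm (fst ((vv_step g h ^^ N) (x, v)) - X (N * h))
    \<le> 24/23 * (N * (L * Vm * h ^ 3 / 6) + h * ((M * Vm\<^sup>2 + L * L * Xm) * h ^ 3 / 12) * (real N)\<^sup>2 / 2)"
proof -
  define xs where "xs j = fst ((vv_step g h ^^ j) (x, v))" for j
  define vs where "vs j = snd ((vv_step g h ^^ j) (x, v))" for j
  have xs: "xs (Suc j) = xs j + h *\<^sub>R vs j - (h\<^sup>2 / 2) *\<^sub>R g (xs j)"
    and vs: "vs (Suc j) = vs j - (h / 2) *\<^sub>R (g (xs j) + g (xs (Suc j)))" for j
    by (simp_all add: xs_def vs_def vv_step_def Let_def)
  have "0 \<le> N * h" using \<open>0 \<le> h\<close> by simp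
  note bounds = ham_sol_bounds[OF sol \<open>0 \<le> N * h\<close> small, folded Xm_def, folded Vm_def]
  have X_le: "norm (X t) \<le> Xm" and V_le: "norm (V t) \<le> Vm" if "j < N" "t \<in> {j * h..j * h + h}" for j t
  proof -
    have "j * h + h \<le> N * h"
      using \<open>j < N\<close> \<open>0 \<le> h\<close> mult_right_mono[of "real (Suc j)" N h] by (simp add: distrib_right)
    moreover have "0 \<le> j * h" using \<open>0 \<le> h\<close> by simp
    ultimately have "t \<in> {0..N * h}" using that(2) unfolding atLeastAtMost_iff by linarith
    from bounds[OF this] show "norm (X t) \<le> Xm" "norm (V t) \<le> Vm" by auto
  qed
  have jh: "real (Suc j) * h = j * h + h" for j by (simp add: distrib_right)
  show ?thesis
    unfolding xs_def[symmetric]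
  proof (rule error_recursion_le[where f = "\<lambda>j. norm (vs j - V (j * h))"])
    fix j assume "j < N"
    show "norm (xs (Suc j) - X (Suc j * h))
        \<le> norm (xs j - X (j * h)) + h * norm (vs j - V (j * h)) + h\<^sup>2 / 2 * L * norm (xs j - X (j * h))
          + L * Vm * h ^ 3 / 6"
      unfolding xs jh using verlet_position_defect_le[OF sol \<open>0 \<le> h\<close> V_le[OF \<open>j < N\<close>]]
      by (rule verlet_position_error_step[OF \<open>0 \<le> h\<close>])
    show "norm (vs (Suc j) - V (Suc j * h))
        \<le> norm (vs j - V (j * h)) + h / 2 * L * (norm (xs j - X (j * h)) + norm (xs (Suc j) - X (Suc j * h)))
          + (M * Vm\<^sup>2 + L * L * Xm) * h ^ 3 / 12"
      unfolding vs jh using verlet_velocity_defect_le[OF sol \<open>0 \<le> h\<close> V_le[OF \<open>j < N\<close>] X_le[OF \<open>j < N\<close>]]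
      by (rule verlet_velocity_error_step[OF \<open>0 \<le> h\<close>])
  qed (use \<open>0 \<le> h\<close> small L_nonneg M_nonneg in \<open>auto simp: xs_def vs_def ham_solD[OF sol] Xm_def Vm_def\<close>)
qed

end

lemma verlet_error_constant_le:
  fixes L M T nx nv :: real
  assumes "0 \<le> L" "0 \<le> M" "0 \<le> T" "0 \<le> nx" "0 \<le> nv" and small: "L * T\<^sup>2 \<le> 1/12"
  defines "s \<equiv> nx + T * nv"
  defines "Xm \<equiv> 24/23 * s"
  defines "Vm \<equiv> nv + L * T * Xm"
  shows "24/23 * (T * (L * Vm / 6) + T\<^sup>2 * (M * Vm\<^sup>2 + L * L * Xm) / 24) \<le> (L * s + M * s\<^sup>2) / 2"
proof -
  have "0 \<le> s" "0 \<le> T * nv" "T * nv \<le> s" using assms(3-5) by (simp_all add: s_def)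
  have LXm: "L * T\<^sup>2 * Xm \<le> 2/23 * s"
    using mult_right_mono[OF small, of Xm] \<open>0 \<le> s\<close> by (simp add: Xm_def)
  have "0 \<le> T * Vm" using assms(1,3,5) \<open>0 \<le> s\<close> by (simp add: Vm_def Xm_def)
  have W: "T * Vm \<le> 25/23 * s"
    using LXm \<open>T * nv \<le> s\<close> by (simp add: Vm_def algebra_simps power2_eq_square)
  have "24/23 * (T * (L * Vm / 6) + T\<^sup>2 * (M * Vm\<^sup>2 + L * L * Xm) / 24)
      = 24/23 * (L * (T * Vm) / 6 + (M * (T * Vm)\<^sup>2 + L * (L * T\<^sup>2 * Xm)) / 24)"
    by (simp add: algebra_simps power2_eq_square)
  also have "\<dots> \<le> 24/23 * (L * (25/23 * s) / 6 + (M * (25/23 * s)\<^sup>2 + L * (2/23 * s)) / 24)"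
    using W LXm \<open>0 \<le> T * Vm\<close> assms(1,2)
    by (intro mult_left_mono add_mono divide_right_mono mult_left_mono power_mono) auto
  also have "\<dots> = 24/23 * (25/138 * (L * s) + (625/529 * (M * s\<^sup>2) + 2/23 * (L * s)) / 24)"
    by (simp add: power2_eq_square)
  also have "\<dots> \<le> (L * s + M * s\<^sup>2) / 2"
  proof -
    have "24/23 * (25/138 * A + (625/529 * B + 2/23 * A) / 24) \<le> (A + B) / 2"
      if "0 \<le> A" "0 \<le> B" for A B :: real
      using that by (simp add: field_simps)
    then show ?thesis using assms(1,2) \<open>0 \<le> s\<close> by simp
  qed
  finally show ?thesis .
qed

context hamiltonian_field
begin

lemma verlet_global_error:
  fixes T h :: real
  assumes "0 \<le> T" "0 \<le> h" and grid: "h = 0 \<or> (\<exists>N::nat. T = N * h)" and small: "L * T\<^sup>2 \<le> 1/12"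
  shows "norm (vv_q g T h x v - ham_q g T x v)
    \<le> h\<^sup>2 * ((L * (norm x + T * norm v) + M * (norm x + T * norm v)\<^sup>2) / 2)"
proof (cases "h = 0")
  case False
  obtain N :: nat where T: "T = N * h" using grid False by blast
  obtain X V where sol: "ham_sol g x v X V" using ham_sol_exists by blast
  define Xm where "Xm = 24/23 * (norm x + T * norm v)"
  define Vm where "Vm = norm v + L * T * Xm"
  have "norm (vv_q g T h x v - ham_q g T x v)
      \<le> 24/23 * (N * (L * Vm * h ^ 3 / 6) + h * ((M * Vm\<^sup>2 + L * L * Xm) * h ^ 3 / 12) * (real N)\<^sup>2 / 2)"
    using vv_step_iterate_error[OF sol \<open>0 \<le> h\<close>, of N] ham_q_eqI[OF sol \<open>0 \<le> T\<close> small] small False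
    by (simp add: vv_q_def T Xm_def Vm_def)
  also have "\<dots> = h\<^sup>2 * (24/23 * (T * (L * Vm / 6) + T\<^sup>2 * (M * Vm\<^sup>2 + L * L * Xm) / 24))"
    by (simp add: T power2_eq_square power3_eq_cube algebra_simps)
  also have "\<dots> \<le> h\<^sup>2 * ((L * (norm x + T * norm v) + M * (norm x + T * norm v)\<^sup>2) / 2)"
    unfolding Vm_def Xm_def
    by (intro mult_left_mono verlet_error_constant_le L_nonneg M_nonneg \<open>0 \<le> T\<close> small) auto
  finally show ?thesis .
qed (simp add: vv_q_def)

lemma ham_q_shooting:
  assumes "0 < T" and small: "L * T\<^sup>2 \<le> 1/12"
    and close: "norm (ham_q g T y w - ham_q g T x v) \<le> \<epsilon>"
  shows "norm (w - v) \<le> 12/11 * norm (x - y) / T + 23/22 * \<epsilon> / T"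
proof -
  obtain X V where sol: "ham_sol g x v X V" using ham_sol_exists by blast
  obtain X' V' where sol': "ham_sol g y w X' V'" using ham_sol_exists by blast
  have "0 \<le> T" using \<open>0 < T\<close> by simp
  have "norm (X' T - X T) \<le> \<epsilon>"
    using close ham_q_eqI[OF sol \<open>0 \<le> T\<close> small] ham_q_eqI[OF sol' \<open>0 \<le> T\<close> small] by simp
  moreover have "norm (X' T - X T - (y - x) - T *\<^sub>R (w - v)) \<le> (norm (x - y) + T * norm (w - v)) / 23"
    using ham_sol_linearization_le[OF sol' sol \<open>0 \<le> T\<close> small] by (simp add: norm_minus_commute)
  moreover have "T * norm (w - v)
      \<le> norm (X' T - X T) + norm (y - x) + norm (X' T - X T - (y - x) - T *\<^sub>R (w - v))"
    using norm_triangle_ineq4[of "X' T - X T - (y - x)" "X' T - X T - (y - x) - T *\<^sub>R (w - v)"]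
      norm_triangle_ineq4[of "X' T - X T" "y - x"] \<open>0 < T\<close>
    by simp
  ultimately have "T * norm (w - v) \<le> 23/22 * \<epsilon> + 12/11 * norm (x - y)"
    by (simp add: norm_minus_commute)
  then show ?thesis
    using \<open>0 < T\<close> by (simp add: field_simps)
qed

end

lemma shooting_error_le:
  fixes L M T h d nx nv :: real
  assumes "0 < T" "0 \<le> L" "0 \<le> M" "0 \<le> d" "0 \<le> nx" "0 \<le> nv"
  shows "12/11 * d / T + 23/22 * (h\<^sup>2 * ((L * (nx + T * nv) + M * (nx + T * nv)\<^sup>2) / 2)) / T
    \<le> 3 / (2 * T) * d + 2 * h\<^sup>2 * (L / T * nx + L * nv + M / T * nx\<^sup>2 + M * T * nv\<^sup>2)"
proof -
  define P where "P = L / T * nx + L * nv + M / T * nx\<^sup>2 + M * T * nv\<^sup>2"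
  have terms: "0 \<le> L / T * nx" "0 \<le> L * nv" "0 \<le> M / T * nx\<^sup>2" "0 \<le> M * T * nv\<^sup>2"
    using assms by simp_all
  have "(nx + T * nv)\<^sup>2 \<le> 2 * (nx\<^sup>2 + (T * nv)\<^sup>2)"
    using zero_le_power2[of "nx - T * nv"] by (simp add: power2_eq_square algebra_simps)
  then have "(L * (nx + T * nv) + M * (nx + T * nv)\<^sup>2) / 2 / T
      \<le> (L * (nx + T * nv) + M * (2 * (nx\<^sup>2 + (T * nv)\<^sup>2))) / 2 / T"
    using assms by (intro divide_right_mono add_left_mono mult_left_mono) auto
  also have "\<dots> = (L / T * nx + L * nv + 2 * (M / T * nx\<^sup>2 + M * T * nv\<^sup>2)) / 2"
    using \<open>0 < T\<close> by (simp add: field_simps power2_eq_square)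
  also have "\<dots> \<le> P"
  proof -
    have "(a + b + 2 * (c + e)) / 2 \<le> a + b + c + e"
      if "0 \<le> a" "0 \<le> b" "0 \<le> c" "0 \<le> e" for a b c e :: real
      using that by (simp add: field_simps)
    from this[OF terms] show ?thesis by (simp only: P_def)
  qed
  finally have le_P: "(L * (nx + T * nv) + M * (nx + T * nv)\<^sup>2) / 2 / T \<le> P" .
  have "23/22 * (h\<^sup>2 * ((L * (nx + T * nv) + M * (nx + T * nv)\<^sup>2) / 2)) / T
      = 23/22 * h\<^sup>2 * ((L * (nx + T * nv) + M * (nx + T * nv)\<^sup>2) / 2 / T)"
    by simp
  also have "\<dots> \<le> 23/22 * h\<^sup>2 * P"
    using le_P by (intro mult_left_mono) auto
  also have "\<dots> \<le> 2 * h\<^sup>2 * P"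
    using terms by (intro mult_right_mono) (auto simp: P_def)
  finally have "23/22 * (h\<^sup>2 * ((L * (nx + T * nv) + M * (nx + T * nv)\<^sup>2) / 2)) / T \<le> 2 * h\<^sup>2 * P" .
  moreover have "12/11 * d / T \<le> 3 / (2 * T) * d"
    using assms by (simp add: field_simps)
  ultimately show ?thesis
    unfolding P_def by (rule add_mono[rotated])
qed

theorem lemma6:
  fixes f :: "'a::euclidean_space \<Rightarrow> real"
    and g :: "'a \<Rightarrow> 'a"
    and H :: "'a \<Rightarrow> ('a \<Rightarrow>\<^sub>L 'a)"
    and D3 :: "'a \<Rightarrow> ('a \<Rightarrow>\<^sub>L ('a \<Rightarrow>\<^sub>L 'a))"
    and L M T h :: real
    and x y :: 'a
    and \<Phi> :: "'a \<Rightarrow> 'a"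
  assumes min0: "\<forall>z. f 0 \<le> f z" and f0: "f 0 = 0"
    and grad: "\<forall>z. (f has_derivative (\<lambda>u. g z \<bullet> u)) (at z)"
    and hess: "\<forall>z. (g has_derivative blinfun_apply (H z)) (at z)"
    and third: "\<forall>z. (H has_derivative blinfun_apply (D3 z)) (at z)"
    and D3_cont: "continuous_on UNIV D3"
    and L_bound: "\<forall>z. norm (H z) \<le> L"
    and M_bound: "\<forall>z. norm (D3 z) \<le> M"
    and T_pos: "T > 0" and h_nonneg: "h \<ge> 0"
    and T_div: "h = 0 \<or> (\<exists>N::nat. T = real N * h)"
    and small: "L * (T\<^sup>2 + T * h) \<le> 1 / 12"
    and Phi: "\<forall>v. vv_q g T h x v = ham_q g T y (\<Phi> v)"
  shows "\<forall>v. norm (\<Phi> v - v) \<le> 3 / (2 * T) * norm (x - y)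
            + 2 * h\<^sup>2 * (L / T * norm x + L * norm v + M / T * (norm x)\<^sup>2 + M * T * (norm v)\<^sup>2)"
proof
  fix v
  have "(\<lambda>u. g 0 \<bullet> u) = (\<lambda>u. 0)"
    by (rule differential_zero_maxmin[of 0 UNIV f]) (use grad min0 in auto)
  then have "g 0 = 0"
    by (metis inner_eq_zero_iff)
  then interpret hamiltonian_field g H D3 L M
    using hess third L_bound M_bound by unfold_locales auto
  have small': "L * T\<^sup>2 \<le> 1/12"
    using small mult_nonneg_nonneg[OF L_nonneg, of "T * h"] T_pos h_nonneg by (simp add: algebra_simps)
  have "norm (ham_q g T y (\<Phi> v) - ham_q g T x v)
      \<le> h\<^sup>2 * ((L * (norm x + T * norm v) + M * (norm x + T * norm v)\<^sup>2) / 2)"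
    using verlet_global_error[of T h x v] T_pos h_nonneg T_div small' Phi by simp
  from ham_q_shooting[OF T_pos small' this]
  show "norm (\<Phi> v - v) \<le> 3 / (2 * T) * norm (x - y)
      + 2 * h\<^sup>2 * (L / T * norm x + L * norm v + M / T * (norm x)\<^sup>2 + M * T * (norm v)\<^sup>2)"
    using shooting_error_le[OF T_pos L_nonneg M_nonneg norm_ge_zero norm_ge_zero norm_ge_zero]
    by (rule order_trans)
qed

end
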